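(* Let $H\in(\frac12,1)$, $T>0$, $\alpha=\lambda-\mathrm{i}w$ with $w\in\mathbb{R}$, $\lambda=\operatorname{Re}(\alpha)>0$. For $t\in[0,T)$ let $\psi_t(u,v)=(T-u)^{\bar\alpha-1}(T-v)^{-\bar\alpha}\mathbf{1}_{\{0\le v\le u\le t\}}$ and $G_t=I_{1,1}(\psi_t)$. Then - if $\operatorname{Re}(\alpha)\in(0,1-H)$: $\limsup_{t\to T}(T-t)^{2(1-H-\lambda)}\mathbb{E}[|G_t|^2]<\infty$; - if $\operatorname{Re}(\alpha)=1-H$: $\limsup_{t\to T}\frac{1}{-\log(T-t)}\mathbb{E}[|G_t|^2]<\infty$; - if $\operatorname{Re}(\alpha)\in(1-H,1)$: $\lim_{t\to T}\mathbb{E}[|G_t|^2]<\infty$.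
   Context: For $z\in\mathbb{C}$, $x>0$: $x^z:=\exp(z\log x)$. $\zeta_t=\frac1{\sqrt2}(B^1_t+\mathrm{i}B^2_t)$ with $B^1,B^2$ independent fractional Brownian motions with Hurst parameter $H$. Let $\mathfrak{H}$ be the complex Hilbert space obtained by completing complex step functions on $[0,T]$ under $\langle f,g\rangle_{\mathfrak H}=H(2H-1)\int_{[0,T]^2}f(t)\overline{g(s)}|t-s|^{2H-2}\mathrm{d}t\mathrm{d}s$; for deterministic $g$, $\zeta(g):=\int_0^Tg\,\mathrm{d}\zeta$ is the Wiener integral, with $\mathbb{E}[\zeta(g)\overline{\zeta(h)}]=\langle g,h\rangle_{\mathfrak H}$. The complex double Wiener–It\^o integral $I_{1,1}$ is the linear map on $\mathfrak H\otimes\mathfrak H$ with $I_{1,1}(f)=\zeta(g)\overline{\zeta(h)}-\langle g,h\rangle_{\mathfrak H}$ for $f(u,v)=g(u)\overline{h(v)}$, extended by linearity and the isometry $\mathbb{E}|I_{1,1}(f)|^2=\|f\|^2_{\mathfrak H\otimes\mathfrak H}=(H(2H-1))^2\int_{[0,T]^4}f(u_1,v_1)\overline{f(u_2,v_2)}|u_1-u_2|^{2H-2}|v_1-v_2|^{2H-2}\mathrm{d}u_1\mathrm{d}u_2\mathrm{d}v_1\mathrm{d}v_2$. *)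

theory Defs
  imports "HOL-Analysis.Analysis"
begin

text \<open>Complex power of a positive real: x^z = exp(z log x); for x > 0 this is
  exactly Isabelle's complex powr applied to of_real x.\<close>

definition psi :: "real \<Rightarrow> complex \<Rightarrow> real \<Rightarrow> real \<Rightarrow> real \<Rightarrow> complex" where
  "psi T \<alpha> t u v =
     (if 0 \<le> v \<and> v \<le> u \<and> u \<le> t
      then (complex_of_real (T - u)) powr (cnj \<alpha> - 1) * (complex_of_real (T - v)) powr (- cnj \<alpha>)
      else 0)"

text \<open>Integrand of the squared norm in the tensor space H (x) H, variables (u1,u2,v1,v2).\<close>
definition tensor_integrand ::
  "real \<Rightarrow> (real \<Rightarrow> real \<Rightarrow> complex) \<Rightarrow> real \<times> real \<times> real \<times> real \<Rightarrow> complex" where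
  "tensor_integrand H f = (\<lambda>(u1, u2, v1, v2).
      complex_of_real ((H * (2 * H - 1))^2) * f u1 v1 * cnj (f u2 v2)
      * complex_of_real (\<bar>u1 - u2\<bar> powr (2 * H - 2) * \<bar>v1 - v2\<bar> powr (2 * H - 2)))"

definition cube4 :: "real \<Rightarrow> (real \<times> real \<times> real \<times> real) set" where
  "cube4 T = {0..T} \<times> {0..T} \<times> {0..T} \<times> {0..T}"

text \<open>Squared norm in H (x) H (real-valued; the complex integral is real).\<close>
definition tensor_norm2 :: "real \<Rightarrow> real \<Rightarrow> (real \<Rightarrow> real \<Rightarrow> complex) \<Rightarrow> real" where
  "tensor_norm2 H T f = Re (set_lebesgue_integral lborel (cube4 T) (tensor_integrand H f))"

text \<open>E|G_t|^2 = E|I_{1,1}(psi_t)|^2 = ||psi_t||^2 by the isometry of I_{1,1}.\<close>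
definition second_moment_G :: "real \<Rightarrow> real \<Rightarrow> complex \<Rightarrow> real \<Rightarrow> real" where
  "second_moment_G H T \<alpha> t = tensor_norm2 H T (psi T \<alpha> t)"

end

theory Submission
  imports Defs
begin

text \<open>Since v \<le> u on the support of psi_t, |psi_t(u,v)| = (T-u)^(Re alpha - 1) (T-v)^(-Re alpha) is
  dominated by (T-u)^(mu-1) (T-v)^(-mu) for every 0 < mu \<le> Re alpha, so the four-fold integral
  is bounded by a u-part times a v-part. The v-part is finite once mu < 1/2. In the u-part the
  substitution T - u2 = (T - u1) r integrates out u2 and leaves (T - u1)^(2 mu + 2H - 3) times a
  Beta-type constant. Hence E|G_t|^2 is at most a constant times the integral of x^(2 mu + 2H - 3)
  over [T - t, T]. With mu = Re alpha this is O((T-t)^(2(Re alpha + H - 1))) below 1 - H and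
  O(-log(T - t)) at 1 - H. Above 1 - H some mu \<in> (1 - H, Re alpha] makes the dominating function
  integrable up to t = T, and dominated convergence gives the limit E|G_T|^2.\<close>

section \<open>Power integrals on the line\<close>

lemma nn_integral_reflect:
  fixes f :: "real \<Rightarrow> ennreal"
  assumes "f \<in> borel_measurable borel"
  shows "(\<integral>\<^sup>+x. f (c - x) \<partial>lborel) = (\<integral>\<^sup>+x. f x \<partial>lborel)"
  using nn_integral_real_affine[OF assms, of "-1" c] by simp

lemma nn_integral_powr_from_0:
  fixes p c :: real
  assumes "-1 < p" "0 \<le> c"
  shows "(\<integral>\<^sup>+x. ennreal (indicator {0..c} x * x powr p) \<partial>lborel) = ennreal (c powr (p+1) / (p+1))"
  by (rule nn_integral_has_integral_lebesgue) (use has_integral_powr_from_0[OF assms] in auto)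

lemma nn_integral_powr_to_endpoint:
  fixes p T :: real
  assumes "-1 < p" "0 \<le> T"
  shows "(\<integral>\<^sup>+v. ennreal (indicator {0..T} v * (T - v) powr p) \<partial>lborel) = ennreal (T powr (p+1) / (p+1))"
proof -
  have "(\<integral>\<^sup>+v. ennreal (indicator {0..T} v * (T - v) powr p) \<partial>lborel)
      = (\<integral>\<^sup>+v. ennreal (indicator {0..T} (T - v) * (T - v) powr p) \<partial>lborel)"
    by (intro nn_integral_cong) (auto simp: indicator_def)
  also have "\<dots> = (\<integral>\<^sup>+v. ennreal (indicator {0..T} v * v powr p) \<partial>lborel)"
    by (rule nn_integral_reflect[where f = "\<lambda>v. ennreal (indicator {0..T} v * v powr p)"]) measurable
  also have "\<dots> = ennreal (T powr (p+1) / (p+1))"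
    by (rule nn_integral_powr_from_0[OF assms])
  finally show ?thesis .
qed

lemma nn_integral_powr_to_inf:
  fixes p a :: real
  assumes "p < -1" "0 < a"
  shows "(\<integral>\<^sup>+x. ennreal (indicator {a..} x * x powr p) \<partial>lborel) = ennreal (a powr (p+1) / - (p+1))"
proof (rule nn_integral_has_integral_lebesgue)
  show "((\<lambda>x. x powr p) has_integral a powr (p+1) / - (p+1)) {a..}"
    using has_integral_powr_to_inf[OF assms] by (simp only: divide_minus_right minus_divide_left)
qed simp

lemma nn_integral_powr_interval_le:
  fixes p a b :: real
  assumes "p < -1" "0 < a"
  shows "(\<integral>\<^sup>+x. ennreal (indicator {a..b} x * x powr p) \<partial>lborel) \<le> ennreal (a powr (p+1) / - (p+1))"
proof -
  have "(\<integral>\<^sup>+x. ennreal (indicator {a..b} x * x powr p) \<partial>lborel)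
      \<le> (\<integral>\<^sup>+x. ennreal (indicator {a..} x * x powr p) \<partial>lborel)"
    by (rule nn_integral_mono) (auto simp: indicator_def)
  then show ?thesis
    by (simp only: nn_integral_powr_to_inf[OF assms])
qed

lemma nn_integral_inverse_interval:
  fixes a b :: real
  assumes "0 < a" "a \<le> b"
  shows "(\<integral>\<^sup>+x. ennreal (indicator {a..b} x * x powr -1) \<partial>lborel) = ennreal (ln b - ln a)"
proof (rule nn_integral_has_integral_lebesgue)
  show "0 \<le> x powr -1" for x :: real
    by simp
  have "((\<lambda>x. 1 / x) has_integral ln b - ln a) {a..b}"
  proof (rule fundamental_theorem_of_calculus)
    fix x assume "x \<in> {a..b}"
    then have "0 < x" using assms by auto
    then show "(ln has_vector_derivative 1 / x) (at x within {a..b})"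
      by (auto intro!: derivative_eq_intros simp: has_real_derivative_iff_has_vector_derivative[symmetric])
  qed fact
  moreover have "1 / x = x powr -1" if "x \<in> {a..b}" for x
    using that assms by (simp add: powr_minus_divide)
  ultimately show "((\<lambda>x. x powr -1) has_integral ln b - ln a) {a..b}"
    by (rule has_integral_eq[rotated]) auto
qed

lemma nn_integral_abs_powr_le:
  fixes q c :: real
  assumes "-1 < q" "0 \<le> c"
  shows "(\<integral>\<^sup>+s. ennreal (indicator {-c..c} s * \<bar>s\<bar> powr q) \<partial>lborel) \<le> ennreal (2 * (c powr (q+1) / (q+1)))"
proof -
  let ?f = "\<lambda>s. ennreal (indicator {0..c} s * s powr q)"
  have "(\<integral>\<^sup>+s. ennreal (indicator {-c..c} s * \<bar>s\<bar> powr q) \<partial>lborel) \<le> (\<integral>\<^sup>+s. ?f s + ?f (0 - s) \<partial>lborel)"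
    by (rule nn_integral_mono) (auto simp: indicator_def)
  also have "\<dots> = (\<integral>\<^sup>+s. ?f s \<partial>lborel) + (\<integral>\<^sup>+s. ?f (0 - s) \<partial>lborel)"
    by (rule nn_integral_add) auto
  also have "(\<integral>\<^sup>+s. ?f (0 - s) \<partial>lborel) = (\<integral>\<^sup>+s. ?f s \<partial>lborel)"
    by (rule nn_integral_reflect) measurable
  also have "(\<integral>\<^sup>+s. ?f s \<partial>lborel) = ennreal (c powr (q+1) / (q+1))"
    using nn_integral_powr_from_0 assms by simp
  finally show ?thesis
    using assms by (simp add: ennreal_plus[symmetric] del: ennreal_plus)
qed

section \<open>A Beta-type constant and weighted Riesz kernels\<close>

definition beta_kernel :: "real \<Rightarrow> real \<Rightarrow> ennreal" where
  "beta_kernel \<mu> q = (\<integral>\<^sup>+r. ennreal (indicator {0<..} r * r powr (\<mu>-1) * \<bar>1-r\<bar> powr q) \<partial>lborel)"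

text \<open>Near 0 only r^(mu-1) is singular, near 1 only |1-r|^q, and at infinity the integrand
  decays like r^(mu-1+q); this is where mu + q < 0 enters.\<close>
lemma beta_kernel_integrand_le:
  fixes \<mu> q r :: real
  assumes "\<mu> < 1" "q < 0"
  shows "indicator {0<..} r * r powr (\<mu>-1) * \<bar>1-r\<bar> powr q
    \<le> (1/2) powr q * (indicator {0..1/2} r * r powr (\<mu>-1))
     + (1/2) powr (\<mu>-1) * (indicator {-1..1} (1 - r) * \<bar>1 - r\<bar> powr q)
     + (1/2) powr q * (indicator {2..} r * r powr (\<mu>-1+q))"
proof (cases "r > 0")
  case False
  then show ?thesis
    by (auto simp: indicator_def intro!: add_nonneg_nonneg mult_nonneg_nonneg)
next
  case r: True
  have nonneg: "0 \<le> (1/2) powr q * (indicator {0..1/2} r * r powr (\<mu>-1))"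
           "0 \<le> (1/2) powr (\<mu>-1) * (indicator {-1..1} (1 - r) * \<bar>1 - r\<bar> powr q)"
           "0 \<le> (1/2) powr q * (indicator {2..} r * r powr (\<mu>-1+q))"
    by (auto simp: indicator_def)
  consider "r \<le> 1/2" | "1/2 < r" "r \<le> 2" | "2 < r" by linarith
  then show ?thesis
  proof cases
    case 1
    have "\<bar>1-r\<bar> powr q \<le> (1/2) powr q"
      by (rule powr_mono2') (use 1 assms in auto)
    then have "indicator {0<..} r * r powr (\<mu>-1) * \<bar>1-r\<bar> powr q
        \<le> (1/2) powr q * (indicator {0..1/2} r * r powr (\<mu>-1))"
      using 1 r by (simp add: indicator_def mult.commute)
    then show ?thesis using nonneg by linarith
  next
    case 2
    have "r powr (\<mu>-1) \<le> (1/2) powr (\<mu>-1)"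
      by (rule powr_mono2') (use 2 assms in auto)
    then have "indicator {0<..} r * r powr (\<mu>-1) * \<bar>1-r\<bar> powr q
        \<le> (1/2) powr (\<mu>-1) * (indicator {-1..1} (1 - r) * \<bar>1 - r\<bar> powr q)"
      using 2 r by (simp add: indicator_def mult_right_mono)
    then show ?thesis using nonneg by linarith
  next
    case 3
    have "\<bar>1-r\<bar> powr q \<le> (r/2) powr q"
      by (rule powr_mono2') (use 3 assms in auto)
    also have "\<dots> = (1/2) powr q * r powr q"
      by (simp add: powr_divide)
    finally have "r powr (\<mu>-1) * \<bar>1-r\<bar> powr q \<le> (1/2) powr q * r powr (\<mu>-1+q)"
      by (simp add: mult_left_mono powr_add mult.left_commute)
    then have "indicator {0<..} r * r powr (\<mu>-1) * \<bar>1-r\<bar> powr q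
        \<le> (1/2) powr q * (indicator {2..} r * r powr (\<mu>-1+q))"
      using 3 r by (simp add: indicator_def)
    then show ?thesis using nonneg by linarith
  qed
qed

lemma beta_kernel_finite:
  fixes \<mu> q :: real
  assumes "0 < \<mu>" "\<mu> < 1" "-1 < q" "\<mu> + q < 0"
  shows "beta_kernel \<mu> q < \<infinity>"
proof -
  let ?A = "\<lambda>r. ennreal (indicator {0..1/2} r * r powr (\<mu>-1))"
  let ?B = "\<lambda>r. ennreal (indicator {-1..1} r * \<bar>r\<bar> powr q)"
  let ?C = "\<lambda>r. ennreal (indicator {2..} r * r powr (\<mu>-1+q))"
  have "beta_kernel \<mu> q
     \<le> (\<integral>\<^sup>+r. ennreal ((1/2) powr q) * ?A r + ennreal ((1/2) powr (\<mu>-1)) * ?B (1 - r)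
             + ennreal ((1/2) powr q) * ?C r \<partial>lborel)"
    unfolding beta_kernel_def
  proof (rule nn_integral_mono)
    fix r :: real
    have "ennreal (indicator {0<..} r * r powr (\<mu>-1) * \<bar>1-r\<bar> powr q)
      \<le> ennreal ((1/2) powr q * (indicator {0..1/2} r * r powr (\<mu>-1))
          + (1/2) powr (\<mu>-1) * (indicator {-1..1} (1 - r) * \<bar>1 - r\<bar> powr q)
          + (1/2) powr q * (indicator {2..} r * r powr (\<mu>-1+q)))"
      by (rule ennreal_leI, rule beta_kernel_integrand_le) (use assms in auto)
    also have "\<dots> = ennreal ((1/2) powr q) * ?A r + ennreal ((1/2) powr (\<mu>-1)) * ?B (1 - r)
             + ennreal ((1/2) powr q) * ?C r"
      by (simp add: ennreal_plus ennreal_mult' add_nonneg_nonneg)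
    finally show "ennreal (indicator {0<..} r * r powr (\<mu>-1) * \<bar>1-r\<bar> powr q)
      \<le> ennreal ((1/2) powr q) * ?A r + ennreal ((1/2) powr (\<mu>-1)) * ?B (1 - r)
             + ennreal ((1/2) powr q) * ?C r" .
  qed
  also have "\<dots> = ennreal ((1/2) powr q) * (\<integral>\<^sup>+r. ?A r \<partial>lborel)
      + ennreal ((1/2) powr (\<mu>-1)) * (\<integral>\<^sup>+r. ?B (1 - r) \<partial>lborel)
      + ennreal ((1/2) powr q) * (\<integral>\<^sup>+r. ?C r \<partial>lborel)"
    by (simp add: nn_integral_add nn_integral_cmult)
  also have "(\<integral>\<^sup>+r. ?B (1 - r) \<partial>lborel) = (\<integral>\<^sup>+r. ?B r \<partial>lborel)"
    by (rule nn_integral_reflect) measurable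
  also have "(\<integral>\<^sup>+r. ?A r \<partial>lborel) = ennreal ((1/2) powr (\<mu>-1+1) / (\<mu>-1+1))"
    by (rule nn_integral_powr_from_0) (use assms in auto)
  also have "(\<integral>\<^sup>+r. ?C r \<partial>lborel) = ennreal (2 powr (\<mu>-1+q+1) / - (\<mu>-1+q+1))"
    by (rule nn_integral_powr_to_inf) (use assms in auto)
  finally have le: "beta_kernel \<mu> q
     \<le> ennreal ((1/2) powr q) * ennreal ((1/2) powr (\<mu>-1+1) / (\<mu>-1+1))
      + ennreal ((1/2) powr (\<mu>-1)) * (\<integral>\<^sup>+r. ?B r \<partial>lborel)
      + ennreal ((1/2) powr q) * ennreal (2 powr (\<mu>-1+q+1) / - (\<mu>-1+q+1))" .
  have "(\<integral>\<^sup>+r. ?B r \<partial>lborel) < \<infinity>"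
    using nn_integral_abs_powr_le[of q 1] assms by (simp add: le_less_trans)
  then show ?thesis
    by (intro le_less_trans[OF le]) (simp add: ennreal_mult_less_top)
qed

lemma nn_integral_beta_kernel_scaled:
  fixes \<mu> q x :: real
  assumes "0 < x"
  shows "(\<integral>\<^sup>+s. ennreal (indicator {0<..} s * s powr (\<mu>-1) * \<bar>x - s\<bar> powr q) \<partial>lborel)
    = ennreal (x powr (\<mu>+q)) * beta_kernel \<mu> q"
proof -
  let ?f = "\<lambda>s. ennreal (indicator {0<..} s * s powr (\<mu>-1) * \<bar>x - s\<bar> powr q)"
  have "(\<integral>\<^sup>+s. ?f s \<partial>lborel) = ennreal \<bar>x\<bar> * (\<integral>\<^sup>+r. ?f (0 + x * r) \<partial>lborel)"
    by (rule nn_integral_real_affine) (use assms in auto)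
  also have "(\<integral>\<^sup>+r. ?f (0 + x * r) \<partial>lborel) = (\<integral>\<^sup>+r. ennreal (x powr (\<mu>-1+q))
      * ennreal (indicator {0<..} r * r powr (\<mu>-1) * \<bar>1-r\<bar> powr q) \<partial>lborel)"
  proof (rule nn_integral_cong)
    fix r :: real
    have "\<bar>x - x*r\<bar> = \<bar>x * (1 - r)\<bar>"
      by (simp add: algebra_simps)
    also have "\<dots> = x * \<bar>1 - r\<bar>"
      using assms by (simp add: abs_mult)
    finally have "r > 0 \<Longrightarrow> (x*r) powr (\<mu>-1) * \<bar>x - x*r\<bar> powr q
        = x powr (\<mu>-1+q) * (r powr (\<mu>-1) * \<bar>1-r\<bar> powr q)"
      using assms by (simp add: powr_mult powr_add)
    then show "?f (0 + x * r)
      = ennreal (x powr (\<mu>-1+q)) * ennreal (indicator {0<..} r * r powr (\<mu>-1) * \<bar>1-r\<bar> powr q)"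
      using assms by (simp add: indicator_def zero_less_mult_iff ennreal_mult[symmetric])
  qed
  also have "\<dots> = ennreal (x powr (\<mu>-1+q)) * beta_kernel \<mu> q"
    unfolding beta_kernel_def by (rule nn_integral_cmult) measurable
  finally show ?thesis
    using assms by (simp add: mult.assoc[symmetric] ennreal_mult[symmetric] powr_add[symmetric] powr_mult_base)
qed

definition weighted_kernel :: "real \<Rightarrow> real \<Rightarrow> real \<Rightarrow> real \<Rightarrow> real \<Rightarrow> real \<Rightarrow> real" where
  "weighted_kernel T a q t u1 u2 = indicator {0..t} u1 * indicator {0..t} u2
     * (T - u1) powr a * (T - u2) powr a * \<bar>u1 - u2\<bar> powr q"

lemma weighted_kernel_nonneg: "0 \<le> weighted_kernel T a q t u1 u2"
  by (simp add: weighted_kernel_def)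

lemma weighted_kernel_measurable [measurable]:
  assumes "f \<in> borel_measurable M" "g \<in> borel_measurable M"
  shows "(\<lambda>x. weighted_kernel T a q t (f x) (g x)) \<in> borel_measurable M"
  unfolding weighted_kernel_def using assms by measurable

lemma weighted_kernel_mono: "t \<le> t' \<Longrightarrow> weighted_kernel T a q t u1 u2 \<le> weighted_kernel T a q t' u1 u2"
  by (auto simp: weighted_kernel_def indicator_def)

lemma nn_integral_weighted_kernel_slice_le:
  fixes T q \<mu> t u1 :: real
  assumes "t \<le> T"
  shows "(\<integral>\<^sup>+u2. weighted_kernel T (\<mu>-1) q t u1 u2 \<partial>lborel)
    \<le> beta_kernel \<mu> q * ennreal (indicator {0..t} u1 * (T-u1) powr (2*\<mu>-1+q))"
proof (cases "0 \<le> u1 \<and> u1 \<le> t \<and> u1 < T")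
  case False
  then have "weighted_kernel T (\<mu>-1) q t u1 u2 = 0" for u2
    using assms by (auto simp: weighted_kernel_def indicator_def)
  then show ?thesis by simp
next
  case True
  define x where "x = T - u1"
  have x: "0 < x" using True x_def by simp
  let ?f = "\<lambda>s. ennreal (indicator {0<..} s * s powr (\<mu>-1) * \<bar>x - s\<bar> powr q)"
  have "weighted_kernel T (\<mu>-1) q t u1 u2
      \<le> x powr (\<mu>-1) * (indicator {0<..} (T-u2) * (T-u2) powr (\<mu>-1) * \<bar>x - (T-u2)\<bar> powr q)" for u2
  proof -
    have "\<bar>x - (T-u2)\<bar> = \<bar>u1 - u2\<bar>"
      by (simp add: x_def)
    moreover have "indicator {0..t} u2 * (T-u2) powr (\<mu>-1) \<le> indicator {0<..} (T-u2) * (T-u2) powr (\<mu>-1)"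
      by (cases "u2 = T") (use assms in \<open>auto simp: indicator_def\<close>)
    ultimately show ?thesis
      using True unfolding weighted_kernel_def x_def
      by (auto intro!: mult_left_mono mult_right_mono simp: indicator_def)
  qed
  then have "(\<integral>\<^sup>+u2. weighted_kernel T (\<mu>-1) q t u1 u2 \<partial>lborel)
      \<le> (\<integral>\<^sup>+u2. ennreal (x powr (\<mu>-1)) * ?f (T - u2) \<partial>lborel)"
    by (intro nn_integral_mono) (simp add: ennreal_mult'[symmetric])
  also have "\<dots> = ennreal (x powr (\<mu>-1)) * (\<integral>\<^sup>+u2. ?f (T - u2) \<partial>lborel)"
    by (rule nn_integral_cmult) measurable
  also have "(\<integral>\<^sup>+u2. ?f (T - u2) \<partial>lborel) = (\<integral>\<^sup>+s. ?f s \<partial>lborel)"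
    by (rule nn_integral_reflect) measurable
  also have "\<dots> = ennreal (x powr (\<mu>+q)) * beta_kernel \<mu> q"
    by (rule nn_integral_beta_kernel_scaled[OF x])
  also have "ennreal (x powr (\<mu>-1)) * (ennreal (x powr (\<mu>+q)) * beta_kernel \<mu> q)
      = beta_kernel \<mu> q * ennreal (x powr (2*\<mu>-1+q))"
  proof -
    have "x powr (\<mu>-1) * x powr (\<mu>+q) = x powr ((\<mu>-1) + (\<mu>+q))"
      by (rule powr_add[symmetric])
    also have "(\<mu>-1) + (\<mu>+q) = 2*\<mu>-1+q"
      by simp
    finally have "x powr (\<mu>-1) * x powr (\<mu>+q) = x powr (2*\<mu>-1+q)" .
    then show ?thesis
      by (simp add: ennreal_mult'[symmetric] mult.left_commute mult.commute)
  qed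
  finally show ?thesis
    using True by (simp add: x_def)
qed

lemma nn_integral_weighted_kernel_le:
  fixes T q \<mu> t :: real
  assumes "t \<le> T"
  shows "(\<integral>\<^sup>+u1. \<integral>\<^sup>+u2. weighted_kernel T (\<mu>-1) q t u1 u2 \<partial>lborel \<partial>lborel)
     \<le> beta_kernel \<mu> q * (\<integral>\<^sup>+x. ennreal (indicator {T-t..T} x * x powr (2*\<mu>-1+q)) \<partial>lborel)"
proof -
  let ?g = "\<lambda>x. ennreal (indicator {T-t..T} x * x powr (2*\<mu>-1+q))"
  have "(\<integral>\<^sup>+u1. \<integral>\<^sup>+u2. weighted_kernel T (\<mu>-1) q t u1 u2 \<partial>lborel \<partial>lborel)
      \<le> (\<integral>\<^sup>+u1. beta_kernel \<mu> q * ?g (T - u1) \<partial>lborel)"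
  proof (rule nn_integral_mono)
    fix u1 :: real
    have "indicator {T-t..T} (T - u1) = (indicator {0..t} u1 :: real)"
      by (auto simp: indicator_def)
    then show "(\<integral>\<^sup>+u2. weighted_kernel T (\<mu>-1) q t u1 u2 \<partial>lborel) \<le> beta_kernel \<mu> q * ?g (T - u1)"
      using nn_integral_weighted_kernel_slice_le[OF assms] by simp
  qed
  also have "\<dots> = beta_kernel \<mu> q * (\<integral>\<^sup>+u1. ?g (T - u1) \<partial>lborel)"
    by (rule nn_integral_cmult) measurable
  also have "(\<integral>\<^sup>+u1. ?g (T - u1) \<partial>lborel) = (\<integral>\<^sup>+x. ?g x \<partial>lborel)"
    by (rule nn_integral_reflect) measurable
  finally show ?thesis .
qed

lemma nn_integral_abs_diff_powr_le:
  fixes T q x :: real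
  assumes "0 \<le> T" "-1 < q"
  shows "(\<integral>\<^sup>+y. ennreal (indicator {0..T} x * indicator {0..T} y * \<bar>x - y\<bar> powr q) \<partial>lborel)
    \<le> ennreal (2 * (T powr (q+1) / (q+1)))"
proof -
  have "(\<integral>\<^sup>+y. ennreal (indicator {0..T} x * indicator {0..T} y * \<bar>x - y\<bar> powr q) \<partial>lborel)
     \<le> (\<integral>\<^sup>+y. ennreal (indicator {-T..T} (x - y) * \<bar>x - y\<bar> powr q) \<partial>lborel)"
    by (rule nn_integral_mono) (auto simp: indicator_def)
  also have "\<dots> = (\<integral>\<^sup>+s. ennreal (indicator {-T..T} s * \<bar>s\<bar> powr q) \<partial>lborel)"
    by (rule nn_integral_reflect[where f = "\<lambda>s. ennreal (indicator {-T..T} s * \<bar>s\<bar> powr q)"]) measurable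
  also have "\<dots> \<le> ennreal (2 * (T powr (q+1) / (q+1)))"
    by (rule nn_integral_abs_powr_le) (use assms in auto)
  finally show ?thesis .
qed

lemma nn_integral_weight_times_kernel_le:
  fixes R :: "'a \<Rightarrow> ennreal" and S :: "'a \<Rightarrow> 'b \<Rightarrow> ennreal"
  assumes "R \<in> borel_measurable M" "\<And>x. S x \<in> borel_measurable N"
    and "\<And>x. (\<integral>\<^sup>+y. S x y \<partial>N) \<le> K"
  shows "(\<integral>\<^sup>+x. \<integral>\<^sup>+y. R x * S x y \<partial>N \<partial>M) \<le> (\<integral>\<^sup>+x. R x \<partial>M) * K"
proof -
  have "(\<integral>\<^sup>+x. \<integral>\<^sup>+y. R x * S x y \<partial>N \<partial>M) = (\<integral>\<^sup>+x. R x * (\<integral>\<^sup>+y. S x y \<partial>N) \<partial>M)"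
    by (simp add: nn_integral_cmult assms(2))
  also have "\<dots> \<le> (\<integral>\<^sup>+x. R x * K \<partial>M)"
    by (intro nn_integral_mono mult_left_mono assms(3)) simp
  also have "\<dots> = (\<integral>\<^sup>+x. R x \<partial>M) * K"
    by (rule nn_integral_multc) (rule assms(1))
  finally show ?thesis .
qed

lemma powr_mult_powr_le_add:
  fixes x y a :: real
  shows "x powr a * y powr a \<le> x powr (2*a) + y powr (2*a)"
proof -
  have "b * c \<le> b * b + c * c" if "0 \<le> b" "0 \<le> c" for b c :: real
  proof -
    have "2 * b * c \<le> b * b + c * c"
      using sum_squares_bound[of b c] by (simp add: power2_eq_square)
    moreover have "0 \<le> b * c"
      using that by simp
    ultimately show ?thesis by linarith
  qed
  moreover have "x powr (2*a) = x powr a * x powr a" "y powr (2*a) = y powr a * y powr a"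
    by (simp_all add: powr_add[symmetric])
  ultimately show ?thesis
    by simp
qed

text \<open>By (T-v1)^a (T-v2)^a \<le> (T-v1)^(2a) + (T-v2)^(2a) and symmetry, it suffices to integrate one
  weight against |v1 - v2|^q, whose integral in the other variable is bounded uniformly.\<close>
lemma weighted_kernel_finite:
  fixes T a q :: real
  assumes "0 \<le> T" "-1 < 2*a" "-1 < q"
  shows "(\<integral>\<^sup>+v1. \<integral>\<^sup>+v2. weighted_kernel T a q T v1 v2 \<partial>lborel \<partial>lborel) < \<infinity>"
proof -
  define R where "R v = indicator {0..T} v * (T-v) powr (2*a)" for v :: real
  define S where "S v1 v2 = indicator {0..T} v1 * indicator {0..T} v2 * \<bar>v1-v2\<bar> powr q" for v1 v2 :: real
  define K where "K = 2 * (T powr (q+1) / (q+1))"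
  have [measurable]: "R \<in> borel_measurable borel"
    unfolding R_def by measurable
  have [measurable]: "case_prod S \<in> borel_measurable (lborel \<Otimes>\<^sub>M lborel)"
    unfolding S_def by measurable
  have R_nonneg: "0 \<le> R v" and S_nonneg: "0 \<le> S v1 v2" for v v1 v2
    by (simp_all add: R_def S_def)
  have S_sym: "S v1 v2 = S v2 v1" for v1 v2
    unfolding S_def by (simp add: abs_minus_commute mult_ac)
  have S_bound: "(\<integral>\<^sup>+v2. S v1 v2 \<partial>lborel) \<le> ennreal K" for v1
    unfolding S_def K_def by (rule nn_integral_abs_diff_powr_le) (use assms in auto)
  have R_finite: "(\<integral>\<^sup>+v. R v \<partial>lborel) < \<infinity>"
    using nn_integral_powr_to_endpoint[of "2*a" T] assms by (simp add: R_def)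
  have "weighted_kernel T a q T v1 v2 \<le> R v1 * S v1 v2 + R v2 * S v1 v2" for v1 v2
  proof -
    have "(T-v1) powr a * (T-v2) powr a * \<bar>v1-v2\<bar> powr q
        \<le> ((T-v1) powr (2*a) + (T-v2) powr (2*a)) * \<bar>v1-v2\<bar> powr q"
      by (intro mult_right_mono powr_mult_powr_le_add) simp
    then show ?thesis
      unfolding weighted_kernel_def R_def S_def by (auto simp: indicator_def algebra_simps)
  qed
  then have "(\<integral>\<^sup>+v1. \<integral>\<^sup>+v2. weighted_kernel T a q T v1 v2 \<partial>lborel \<partial>lborel)
     \<le> (\<integral>\<^sup>+v1. \<integral>\<^sup>+v2. ennreal (R v1) * S v1 v2 + ennreal (R v2) * S v2 v1 \<partial>lborel \<partial>lborel)"
    by (intro nn_integral_mono)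
      (simp add: S_sym R_nonneg S_nonneg ennreal_mult'[symmetric] ennreal_plus[symmetric] del: ennreal_plus)
  also have "\<dots> = (\<integral>\<^sup>+v1. \<integral>\<^sup>+v2. ennreal (R v1) * S v1 v2 \<partial>lborel \<partial>lborel)
      + (\<integral>\<^sup>+v1. \<integral>\<^sup>+v2. ennreal (R v2) * S v2 v1 \<partial>lborel \<partial>lborel)"
    by (simp add: nn_integral_add)
  also have "(\<integral>\<^sup>+v1. \<integral>\<^sup>+v2. ennreal (R v2) * S v2 v1 \<partial>lborel \<partial>lborel)
      = (\<integral>\<^sup>+v2. \<integral>\<^sup>+v1. ennreal (R v2) * S v2 v1 \<partial>lborel \<partial>lborel)"
    by (rule lborel_pair.Fubini'[where f = "\<lambda>x y. ennreal (R x) * S x y"]) measurable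
  also have "(\<integral>\<^sup>+v1. \<integral>\<^sup>+v2. ennreal (R v1) * S v1 v2 \<partial>lborel \<partial>lborel)
      + (\<integral>\<^sup>+v2. \<integral>\<^sup>+v1. ennreal (R v2) * S v2 v1 \<partial>lborel \<partial>lborel)
      \<le> (\<integral>\<^sup>+v. R v \<partial>lborel) * ennreal K + (\<integral>\<^sup>+v. R v \<partial>lborel) * ennreal K"
    using nn_integral_weight_times_kernel_le[OF _ _ S_bound, of "\<lambda>v. ennreal (R v)" lborel]
    by (intro add_mono) simp_all
  also have "\<dots> < \<infinity>"
    using R_finite by (simp add: ennreal_mult_less_top)
  finally show ?thesis .
qed

section \<open>Domination of the kernel psi\<close>

text \<open>A form of psi without complex powr, which the measurability prover can handle.\<close>
lemma psi_eq_exp_ln: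
  fixes T t :: real and \<alpha> :: complex
  assumes "t \<le> T"
  shows "psi T \<alpha> t = (\<lambda>u v. if 0 \<le> v \<and> v \<le> u \<and> u \<le> t \<and> u < T
     then exp ((cnj \<alpha> - 1) * complex_of_real (ln (T-u))) * exp (- cnj \<alpha> * complex_of_real (ln (T-v)))
     else 0)"
proof (intro ext)
  fix u v :: real
  show "psi T \<alpha> t u v = (if 0 \<le> v \<and> v \<le> u \<and> u \<le> t \<and> u < T
     then exp ((cnj \<alpha> - 1) * complex_of_real (ln (T-u))) * exp (- cnj \<alpha> * complex_of_real (ln (T-v)))
     else 0)"
  proof (cases "0 \<le> v \<and> v \<le> u \<and> u \<le> t \<and> u < T")
    case True
    then have "0 < T - u" "0 < T - v"
      by auto
    then show ?thesis
      using True by (simp add: psi_def powr_def Ln_of_real[symmetric] mult.commute)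
  qed (use assms in \<open>auto simp: psi_def\<close>)
qed

lemma psi_measurable [measurable]:
  fixes T t :: real and \<alpha> :: complex
  assumes "t \<le> T" "f \<in> M \<rightarrow>\<^sub>M lborel" "g \<in> M \<rightarrow>\<^sub>M lborel"
  shows "(\<lambda>x. psi T \<alpha> t (f x) (g x)) \<in> borel_measurable M"
proof -
  have "(\<lambda>(u, v). psi T \<alpha> t u v) \<in> borel_measurable (lborel \<Otimes>\<^sub>M lborel)"
    unfolding psi_eq_exp_ln[OF assms(1)] by measurable
  from measurable_compose[OF measurable_Pair[OF assms(2,3)] this] show ?thesis
    by simp
qed

lemma psi_eq_psi_at_T:
  assumes "t \<le> T" "u \<le> t \<or> T \<le> u"
  shows "psi T \<alpha> t u v = psi T \<alpha> T u v"
  using assms unfolding psi_def by (cases "u = T") auto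

lemma powr_mult_powr_shift_le:
  fixes x y lam \<mu> :: real
  assumes "0 < x" "x \<le> y" "\<mu> \<le> lam"
  shows "x powr (lam-1) * y powr (-lam) \<le> x powr (\<mu>-1) * y powr (-\<mu>)"
proof -
  have "x powr (lam-\<mu>) \<le> y powr (lam-\<mu>)"
    by (rule powr_mono2) (use assms in auto)
  then have "(x powr (\<mu>-1) * y powr (-lam)) * x powr (lam-\<mu>) \<le> (x powr (\<mu>-1) * y powr (-lam)) * y powr (lam-\<mu>)"
    by (rule mult_left_mono) simp
  moreover have "x powr (lam-1) = x powr (\<mu>-1) * x powr (lam-\<mu>)" "y powr (-\<mu>) = y powr (-lam) * y powr (lam-\<mu>)"
    by (simp_all add: powr_add[symmetric])
  ultimately show ?thesis
    by (simp add: mult_ac)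
qed

lemma norm_psi_le:
  fixes T \<mu> t u v :: real and \<alpha> :: complex
  assumes "t \<le> T" "\<mu> \<le> Re \<alpha>"
  shows "cmod (psi T \<alpha> t u v) \<le> indicator {0..t} u * indicator {0..T} v * (T-u) powr (\<mu>-1) * (T-v) powr (-\<mu>)"
proof (cases "0 \<le> v \<and> v \<le> u \<and> u \<le> t \<and> u < T")
  case False
  then have "psi T \<alpha> t u v = 0"
    using assms by (auto simp: psi_def)
  then show ?thesis
    by simp
next
  case True
  then have pos: "0 < T - u" and le: "T - u \<le> T - v"
    by auto
  have "cmod (psi T \<alpha> t u v) = (T-u) powr (Re \<alpha> - 1) * (T-v) powr (- Re \<alpha>)"
    using True pos le by (simp add: psi_def norm_mult norm_powr_real_powr)
  also have "\<dots> \<le> (T-u) powr (\<mu>-1) * (T-v) powr (-\<mu>)"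
    by (rule powr_mult_powr_shift_le[OF pos le assms(2)])
  finally show ?thesis
    using True assms by (simp add: indicator_def)
qed

lemma tensor_integrand_psi_measurable:
  fixes T t H :: real and \<alpha> :: complex
  assumes "t \<le> T"
  shows "tensor_integrand H (psi T \<alpha> t) \<in> borel_measurable lborel"
proof -
  have [measurable]: "(cnj :: complex \<Rightarrow> complex) \<in> borel_measurable borel"
    by (intro borel_measurable_continuous_onI continuous_intros)
  have [measurable]: "(\<lambda>(u1::real, u2::real, v1::real, v2::real).
      \<bar>u1 - u2\<bar> powr (2*H - 2) * \<bar>v1 - v2\<bar> powr (2*H - 2))
      \<in> borel_measurable (lborel \<Otimes>\<^sub>M lborel \<Otimes>\<^sub>M lborel \<Otimes>\<^sub>M lborel)"
    by measurable
  have "tensor_integrand H (psi T \<alpha> t) \<in> borel_measurable (lborel \<Otimes>\<^sub>M lborel \<Otimes>\<^sub>M lborel \<Otimes>\<^sub>M lborel)"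
    using assms unfolding tensor_integrand_def by measurable
  then show ?thesis
    by (simp add: lborel_prod)
qed

definition dominating_integrand :: "real \<Rightarrow> real \<Rightarrow> real \<Rightarrow> real \<Rightarrow> real \<times> real \<times> real \<times> real \<Rightarrow> real" where
  "dominating_integrand H T \<mu> t = (\<lambda>(u1, u2, v1, v2). (H * (2*H - 1))^2
     * weighted_kernel T (\<mu>-1) (2*H-2) t u1 u2 * weighted_kernel T (-\<mu>) (2*H-2) T v1 v2)"

lemma dominating_integrand_measurable: "dominating_integrand H T \<mu> t \<in> borel_measurable lborel"
proof -
  have "dominating_integrand H T \<mu> t \<in> borel_measurable (lborel \<Otimes>\<^sub>M lborel \<Otimes>\<^sub>M lborel \<Otimes>\<^sub>M lborel)"
    unfolding dominating_integrand_def by measurable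
  then show ?thesis
    by (simp add: lborel_prod)
qed

lemma dominating_integrand_mono:
  "t \<le> t' \<Longrightarrow> dominating_integrand H T \<mu> t z \<le> dominating_integrand H T \<mu> t' z"
  unfolding dominating_integrand_def
  by (cases z) (auto intro!: mult_left_mono mult_right_mono weighted_kernel_mono simp: weighted_kernel_nonneg)

lemma norm_tensor_integrand_psi_le:
  fixes H T \<mu> t :: real and \<alpha> :: complex
  assumes "t \<le> T" "\<mu> \<le> Re \<alpha>"
  shows "norm (indicator (cube4 T) z *\<^sub>R tensor_integrand H (psi T \<alpha> t) z) \<le> dominating_integrand H T \<mu> t z"
proof -
  obtain u1 u2 v1 v2 where z: "z = (u1, u2, v1, v2)"
    by (cases z) auto
  let ?b = "\<lambda>u v. indicator {0..t} u * indicator {0..T} v * (T-u) powr (\<mu>-1) * (T-v) powr (-\<mu>)"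
  let ?K = "\<bar>u1 - u2\<bar> powr (2*H - 2) * \<bar>v1 - v2\<bar> powr (2*H - 2)"
  have "norm (indicator (cube4 T) z *\<^sub>R tensor_integrand H (psi T \<alpha> t) z)
      \<le> norm (tensor_integrand H (psi T \<alpha> t) z)"
    by (auto simp: indicator_def)
  also have "\<dots> = (H*(2*H-1))^2 * (cmod (psi T \<alpha> t u1 v1) * cmod (psi T \<alpha> t u2 v2)) * ?K"
    unfolding z tensor_integrand_def
    by (simp only: split norm_mult norm_of_real complex_mod_cnj) (simp add: abs_mult)
  also have "\<dots> \<le> (H*(2*H-1))^2 * (?b u1 v1 * ?b u2 v2) * ?K"
    using norm_psi_le[OF assms] by (intro mult_right_mono mult_left_mono mult_mono) auto
  also have "\<dots> = dominating_integrand H T \<mu> t z"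
    unfolding z dominating_integrand_def weighted_kernel_def by (simp add: mult_ac)
  finally show ?thesis .
qed

section \<open>Estimates for the second moment\<close>

lemma nn_integral_lborel4:
  fixes F :: "real \<times> real \<times> real \<times> real \<Rightarrow> ennreal"
  assumes F: "F \<in> borel_measurable (lborel \<Otimes>\<^sub>M lborel \<Otimes>\<^sub>M lborel \<Otimes>\<^sub>M lborel)"
  shows "(\<integral>\<^sup>+z. F z \<partial>lborel)
    = (\<integral>\<^sup>+u1. \<integral>\<^sup>+u2. \<integral>\<^sup>+v1. \<integral>\<^sup>+v2. F (u1, u2, v1, v2) \<partial>lborel \<partial>lborel \<partial>lborel \<partial>lborel)"
proof -
  have F3: "(\<lambda>w. F (u1, w)) \<in> borel_measurable (lborel \<Otimes>\<^sub>M lborel \<Otimes>\<^sub>M lborel)" for u1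
    using F by measurable
  have F2: "(\<lambda>w. F (u1, u2, w)) \<in> borel_measurable (lborel \<Otimes>\<^sub>M lborel)" for u1 u2
    using F by measurable
  have "(\<integral>\<^sup>+z. F z \<partial>lborel) = (\<integral>\<^sup>+z. F z \<partial>(lborel \<Otimes>\<^sub>M (lborel :: (real \<times> real \<times> real) measure)))"
    by (simp only: lborel_prod)
  also have "\<dots> = (\<integral>\<^sup>+u1. \<integral>\<^sup>+w. F (u1, w) \<partial>lborel \<partial>lborel)"
    by (rule lborel.nn_integral_fst[symmetric]) (use F in \<open>simp add: lborel_prod\<close>)
  also have "\<dots> = (\<integral>\<^sup>+u1. \<integral>\<^sup>+u2. \<integral>\<^sup>+w. F (u1, u2, w) \<partial>lborel \<partial>lborel \<partial>lborel)"
    by (intro nn_integral_cong, subst lborel_prod[symmetric], rule lborel.nn_integral_fst[symmetric])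
      (use F3 in \<open>simp add: lborel_prod\<close>)
  also have "\<dots> = (\<integral>\<^sup>+u1. \<integral>\<^sup>+u2. \<integral>\<^sup>+v1. \<integral>\<^sup>+v2. F (u1, u2, v1, v2) \<partial>lborel \<partial>lborel \<partial>lborel \<partial>lborel)"
    by (intro nn_integral_cong, subst lborel_prod[symmetric], rule lborel.nn_integral_fst[symmetric])
      (use F2 in \<open>simp add: lborel_prod\<close>)
  finally show ?thesis .
qed

lemma nn_integral_lborel4_product:
  fixes f g :: "real \<Rightarrow> real \<Rightarrow> ennreal"
  assumes [measurable]: "case_prod f \<in> borel_measurable (lborel \<Otimes>\<^sub>M lborel)"
    and [measurable]: "case_prod g \<in> borel_measurable (lborel \<Otimes>\<^sub>M lborel)"
  shows "(\<integral>\<^sup>+(u1, u2, v1, v2). f u1 u2 * g v1 v2 \<partial>lborel)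
    = (\<integral>\<^sup>+u1. \<integral>\<^sup>+u2. f u1 u2 \<partial>lborel \<partial>lborel) * (\<integral>\<^sup>+v1. \<integral>\<^sup>+v2. g v1 v2 \<partial>lborel \<partial>lborel)"
proof -
  let ?G = "\<integral>\<^sup>+v1. \<integral>\<^sup>+v2. g v1 v2 \<partial>lborel \<partial>lborel"
  have "(\<integral>\<^sup>+(u1, u2, v1, v2). f u1 u2 * g v1 v2 \<partial>lborel)
      = (\<integral>\<^sup>+u1. \<integral>\<^sup>+u2. \<integral>\<^sup>+v1. \<integral>\<^sup>+v2. f u1 u2 * g v1 v2 \<partial>lborel \<partial>lborel \<partial>lborel \<partial>lborel)"
    by (subst nn_integral_lborel4) simp_all
  also have "\<dots> = (\<integral>\<^sup>+u1. \<integral>\<^sup>+u2. f u1 u2 * ?G \<partial>lborel \<partial>lborel)"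
    by (intro nn_integral_cong) (simp add: nn_integral_cmult)
  also have "\<dots> = (\<integral>\<^sup>+u1. \<integral>\<^sup>+u2. f u1 u2 \<partial>lborel \<partial>lborel) * ?G"
    by (simp add: nn_integral_multc)
  finally show ?thesis .
qed

lemma nn_integral_dominating_integrand_le:
  fixes H T \<mu> t :: real
  assumes "t \<le> T"
  shows "(\<integral>\<^sup>+z. dominating_integrand H T \<mu> t z \<partial>lborel)
    \<le> ennreal ((H*(2*H-1))^2) * beta_kernel \<mu> (2*H-2)
      * (\<integral>\<^sup>+x. ennreal (indicator {T-t..T} x * x powr (2*\<mu> + 2*H - 3)) \<partial>lborel)
      * (\<integral>\<^sup>+v1. \<integral>\<^sup>+v2. weighted_kernel T (-\<mu>) (2*H-2) T v1 v2 \<partial>lborel \<partial>lborel)"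
proof -
  let ?c = "(H*(2*H-1))^2"
  have "(\<integral>\<^sup>+z. dominating_integrand H T \<mu> t z \<partial>lborel)
      = (\<integral>\<^sup>+(u1, u2, v1, v2). ennreal (?c * weighted_kernel T (\<mu>-1) (2*H-2) t u1 u2)
          * ennreal (weighted_kernel T (-\<mu>) (2*H-2) T v1 v2) \<partial>lborel)"
    unfolding dominating_integrand_def
    by (intro nn_integral_cong) (auto simp: ennreal_mult'[symmetric] weighted_kernel_nonneg)
  also have "\<dots> = (\<integral>\<^sup>+u1. \<integral>\<^sup>+u2. ennreal ?c * weighted_kernel T (\<mu>-1) (2*H-2) t u1 u2 \<partial>lborel \<partial>lborel)
      * (\<integral>\<^sup>+v1. \<integral>\<^sup>+v2. weighted_kernel T (-\<mu>) (2*H-2) T v1 v2 \<partial>lborel \<partial>lborel)"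
    by (subst nn_integral_lborel4_product) (simp_all add: ennreal_mult')
  also have "(\<integral>\<^sup>+u1. \<integral>\<^sup>+u2. ennreal ?c * weighted_kernel T (\<mu>-1) (2*H-2) t u1 u2 \<partial>lborel \<partial>lborel)
      = ennreal ?c * (\<integral>\<^sup>+u1. \<integral>\<^sup>+u2. weighted_kernel T (\<mu>-1) (2*H-2) t u1 u2 \<partial>lborel \<partial>lborel)"
    by (simp add: nn_integral_cmult)
  also have "(\<integral>\<^sup>+u1. \<integral>\<^sup>+u2. weighted_kernel T (\<mu>-1) (2*H-2) t u1 u2 \<partial>lborel \<partial>lborel)
      \<le> beta_kernel \<mu> (2*H-2) * (\<integral>\<^sup>+x. ennreal (indicator {T-t..T} x * x powr (2*\<mu> + 2*H - 3)) \<partial>lborel)"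
    using nn_integral_weighted_kernel_le[OF assms, of \<mu> "2*H-2"] by (simp add: algebra_simps)
  finally show ?thesis
    by (simp add: mult_left_mono mult_right_mono mult.assoc)
qed

lemma dominating_integrand_integrable:
  fixes H T \<mu> t :: real
  assumes "1/2 < H" "0 \<le> T" "t \<le> T" "0 < \<mu>" "\<mu> < 1/2" "\<mu> < 2 - 2*H"
    and "(\<integral>\<^sup>+x. ennreal (indicator {T-t..T} x * x powr (2*\<mu> + 2*H - 3)) \<partial>lborel) < \<infinity>"
  shows "integrable lborel (dominating_integrand H T \<mu> t)"
proof (rule integrableI_bounded)
  have "beta_kernel \<mu> (2*H-2) < \<infinity>"
    by (rule beta_kernel_finite) (use assms in auto)
  moreover have "(\<integral>\<^sup>+v1. \<integral>\<^sup>+v2. weighted_kernel T (-\<mu>) (2*H-2) T v1 v2 \<partial>lborel \<partial>lborel) < \<infinity>"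
    by (rule weighted_kernel_finite) (use assms in auto)
  ultimately have "(\<integral>\<^sup>+z. dominating_integrand H T \<mu> t z \<partial>lborel) < \<infinity>"
    using nn_integral_dominating_integrand_le[OF assms(3), of H \<mu>] assms(7)
    by (auto simp: ennreal_mult_less_top elim: le_less_trans)
  moreover have "dominating_integrand H T \<mu> t z \<ge> 0" for z
    by (auto simp: dominating_integrand_def weighted_kernel_nonneg split: prod.splits)
  ultimately show "(\<integral>\<^sup>+z. ennreal (norm (dominating_integrand H T \<mu> t z)) \<partial>lborel) < \<infinity>"
    by simp
qed (rule dominating_integrand_measurable)

lemma cube4_sets_lborel [measurable]: "cube4 T \<in> sets lborel"
proof -
  have "closed (cube4 T)"
    unfolding cube4_def by (intro closed_Times) auto
  then show ?thesis
    by simp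
qed

lemma set_integrable_tensor_psi:
  fixes H T \<mu> t :: real and \<alpha> :: complex
  assumes "1/2 < H" "0 \<le> T" "t \<le> T" "0 < \<mu>" "\<mu> < 1/2" "\<mu> < 2 - 2*H" "\<mu> \<le> Re \<alpha>"
    and "(\<integral>\<^sup>+x. ennreal (indicator {T-t..T} x * x powr (2*\<mu> + 2*H - 3)) \<partial>lborel) < \<infinity>"
  shows "set_integrable lborel (cube4 T) (tensor_integrand H (psi T \<alpha> t))"
  unfolding set_integrable_def
proof (rule Bochner_Integration.integrable_bound)
  show "integrable lborel (dominating_integrand H T \<mu> t)"
    by (rule dominating_integrand_integrable) (use assms in auto)
  show "(\<lambda>z. indicator (cube4 T) z *\<^sub>R tensor_integrand H (psi T \<alpha> t) z) \<in> borel_measurable lborel"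
    using tensor_integrand_psi_measurable[OF assms(3)] by measurable
  show "AE z in lborel. norm (indicator (cube4 T) z *\<^sub>R tensor_integrand H (psi T \<alpha> t) z)
      \<le> norm (dominating_integrand H T \<mu> t z)"
    by (intro AE_I2 order_trans[OF norm_tensor_integrand_psi_le[OF assms(3,7)]]) simp
qed

lemma second_moment_le:
  fixes H T \<mu> :: real and \<alpha> :: complex
  assumes "1/2 < H" "0 \<le> T" "0 < \<mu>" "\<mu> < 1/2" "\<mu> < 2 - 2*H" "\<mu> \<le> Re \<alpha>"
  obtains C where "0 \<le> C"
    and "\<And>t e. t \<le> T \<Longrightarrow> 0 \<le> e \<Longrightarrow>
      (\<integral>\<^sup>+x. ennreal (indicator {T-t..T} x * x powr (2*\<mu> + 2*H - 3)) \<partial>lborel) \<le> ennreal e \<Longrightarrow>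
      \<bar>second_moment_G H T \<alpha> t\<bar> \<le> C * e"
proof
  let ?N = "\<integral>\<^sup>+v1. \<integral>\<^sup>+v2. weighted_kernel T (-\<mu>) (2*H-2) T v1 v2 \<partial>lborel \<partial>lborel"
  have beta: "beta_kernel \<mu> (2*H-2) = ennreal (enn2real (beta_kernel \<mu> (2*H-2)))"
    using beta_kernel_finite[of \<mu> "2*H-2"] assms by (simp add: ennreal_enn2real_if)
  have N: "?N = ennreal (enn2real ?N)"
    using weighted_kernel_finite[of T "-\<mu>" "2*H-2"] assms by (simp add: ennreal_enn2real_if)
  define C where "C = (H*(2*H-1))^2 * enn2real (beta_kernel \<mu> (2*H-2)) * enn2real ?N"
  show "0 \<le> C"
    unfolding C_def by simp
  fix t e :: real
  assume t: "t \<le> T" and e: "0 \<le> e"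
    and E: "(\<integral>\<^sup>+x. ennreal (indicator {T-t..T} x * x powr (2*\<mu> + 2*H - 3)) \<partial>lborel) \<le> ennreal e"
  let ?f = "\<lambda>z. indicator (cube4 T) z *\<^sub>R tensor_integrand H (psi T \<alpha> t) z"
  have "integrable lborel ?f"
    using set_integrable_tensor_psi[OF assms(1,2) t assms(3-6)] E
    by (simp add: set_integrable_def le_less_trans)
  then have "ennreal (cmod (integral\<^sup>L lborel ?f)) \<le> (\<integral>\<^sup>+z. norm (?f z) \<partial>lborel)"
    by (rule integral_norm_bound_ennreal)
  also have "\<dots> \<le> (\<integral>\<^sup>+z. dominating_integrand H T \<mu> t z \<partial>lborel)"
    by (intro nn_integral_mono ennreal_leI norm_tensor_integrand_psi_le t assms(6))
  also have "\<dots> \<le> ennreal ((H*(2*H-1))^2) * beta_kernel \<mu> (2*H-2) * ennreal e * ?N"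
    using nn_integral_dominating_integrand_le[OF t, of H \<mu>] E
    by (meson mult_left_mono mult_right_mono order_trans zero_le)
  also have "\<dots> = ennreal (C * e)"
    unfolding C_def by (subst beta, subst N) (simp add: ennreal_mult'[symmetric] e mult_ac)
  finally have "cmod (integral\<^sup>L lborel ?f) \<le> C * e"
    using e \<open>0 \<le> C\<close> by (simp add: ennreal_le_iff)
  moreover have "\<bar>second_moment_G H T \<alpha> t\<bar> \<le> cmod (integral\<^sup>L lborel ?f)"
    unfolding second_moment_G_def tensor_norm2_def set_lebesgue_integral_def by (rule abs_Re_le_cmod)
  ultimately show "\<bar>second_moment_G H T \<alpha> t\<bar> \<le> C * e"
    by linarith
qed

lemma integral_dominated_convergence_at_left:
  fixes s :: "real \<Rightarrow> 'a \<Rightarrow> 'b::{banach, second_countable_topology}" and w :: "'a \<Rightarrow> real"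
  assumes "b < a"
    and "f \<in> borel_measurable M" "\<And>t. t \<in> {b<..<a} \<Longrightarrow> s t \<in> borel_measurable M"
    and "integrable M w"
    and lim: "AE x in M. ((\<lambda>t. s t x) \<longlongrightarrow> f x) (at_left a)"
    and "\<And>t. t \<in> {b<..<a} \<Longrightarrow> AE x in M. norm (s t x) \<le> w x"
  shows "((\<lambda>t. integral\<^sup>L M (s t)) \<longlongrightarrow> integral\<^sup>L M f) (at_left a)"
proof (rule tendsto_at_left_sequentially[OF assms(1)])
  fix S :: "nat \<Rightarrow> real"
  assume S: "\<And>n. S n < a" "\<And>n. b < S n" "incseq S" "S \<longlonglongrightarrow> a"
  have S_at_left: "filterlim S (at_left a) sequentially"
    using S by (intro tendsto_imp_filterlim_at_left) auto
  show "(\<lambda>n. integral\<^sup>L M (s (S n))) \<longlonglongrightarrow> integral\<^sup>L M f"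
  proof (rule integral_dominated_convergence[where w = w])
    show "AE x in M. (\<lambda>n. s (S n) x) \<longlonglongrightarrow> f x"
      using lim by eventually_elim (rule filterlim_compose[OF _ S_at_left])
  qed (use assms S in auto)
qed

lemma tensor_integrand_psi_eventually_eq:
  "\<forall>\<^sub>F t in at_left T. tensor_integrand H (psi T \<alpha> t) z = tensor_integrand H (psi T \<alpha> T) z"
proof -
  obtain u1 u2 v1 v2 where z: "z = (u1, u2, v1, v2)"
    by (cases z) auto
  have ev: "\<forall>\<^sub>F t in at_left T. t \<le> T \<and> (u \<le> t \<or> T \<le> u)" for u
  proof (cases "u < T")
    case True
    show ?thesis
      using eventually_at_left_real[OF True] by eventually_elim auto
  next
    case False
    have "T - 1 < T"
      by simp
    from eventually_at_left_real[OF this] show ?thesis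
      by eventually_elim (use False in auto)
  qed
  show ?thesis
    using ev[of u1] ev[of u2]
    by eventually_elim (auto simp: z tensor_integrand_def psi_eq_psi_at_T)
qed

lemma set_integrable_tensor_psi_before_T:
  fixes H T t :: real and \<alpha> :: complex
  assumes "1/2 < H" "H < 1" "0 \<le> t" "t < T" "0 < Re \<alpha>"
  shows "set_integrable lborel (cube4 T) (tensor_integrand H (psi T \<alpha> t))"
proof -
  define \<mu> where "\<mu> = min (Re \<alpha>) ((1 - H) / 2)"
  have \<mu>: "0 < \<mu>" "\<mu> < 1/2" "\<mu> < 2 - 2*H" "\<mu> \<le> Re \<alpha>" "2*\<mu> + 2*H - 3 < -1"
    using assms by (auto simp: \<mu>_def min_def field_simps)
  have "(\<integral>\<^sup>+x. ennreal (indicator {T-t..T} x * x powr (2*\<mu> + 2*H - 3)) \<partial>lborel) < \<infinity>"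
    using nn_integral_powr_interval_le[OF \<mu>(5), of "T - t" T] assms by (simp add: le_less_trans)
  then show ?thesis
    by (rule set_integrable_tensor_psi[rotated -1]) (use assms \<mu> in auto)
qed

lemma second_moment_tendsto_supercritical:
  fixes H T :: real and \<alpha> :: complex
  assumes "1/2 < H" "H < 1" "0 < T" "1 - H < Re \<alpha>"
  shows "((\<lambda>t. second_moment_G H T \<alpha> t) \<longlongrightarrow> second_moment_G H T \<alpha> T) (at_left T)"
proof -
  define \<mu> where "\<mu> = (1 - H + min (Re \<alpha>) (min (1/2) (2 - 2*H))) / 2"
  have \<mu>: "0 < \<mu>" "\<mu> < 1/2" "\<mu> < 2 - 2*H" "\<mu> \<le> Re \<alpha>" "-1 < 2*\<mu> + 2*H - 3"
    using assms by (auto simp: \<mu>_def min_def field_simps)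
  have "(\<integral>\<^sup>+x. ennreal (indicator {T-T..T} x * x powr (2*\<mu> + 2*H - 3)) \<partial>lborel) < \<infinity>"
    using nn_integral_powr_from_0[OF \<mu>(5), of T] assms by simp
  then have dom: "integrable lborel (dominating_integrand H T \<mu> T)"
    by (intro dominating_integrand_integrable) (use assms \<mu> in auto)
  let ?s = "\<lambda>t z. indicator (cube4 T) z *\<^sub>R tensor_integrand H (psi T \<alpha> t) z"
  have meas: "?s t \<in> borel_measurable lborel" if "t \<le> T" for t
    using tensor_integrand_psi_measurable[OF that] by measurable
  have "((\<lambda>t. integral\<^sup>L lborel (?s t)) \<longlongrightarrow> integral\<^sup>L lborel (?s T)) (at_left T)"
  proof (rule integral_dominated_convergence_at_left[where b = 0 and w = "dominating_integrand H T \<mu> T"])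
    show "AE z in lborel. ((\<lambda>t. ?s t z) \<longlongrightarrow> ?s T z) (at_left T)"
      using tensor_integrand_psi_eventually_eq
      by (intro AE_I2 tendsto_eventually) (auto elim: eventually_mono)
    show "AE z in lborel. norm (?s t z) \<le> dominating_integrand H T \<mu> T z" if "t \<in> {0<..<T}" for t
    proof (rule AE_I2)
      fix z
      have "norm (?s t z) \<le> dominating_integrand H T \<mu> t z"
        using that \<mu>(4) by (intro norm_tensor_integrand_psi_le) auto
      also have "\<dots> \<le> dominating_integrand H T \<mu> T z"
        using that by (intro dominating_integrand_mono) auto
      finally show "norm (?s t z) \<le> dominating_integrand H T \<mu> T z" .
    qed
  qed (use assms meas dom in auto)
  then show ?thesis
    unfolding second_moment_G_def tensor_norm2_def set_lebesgue_integral_def by (rule tendsto_Re)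
qed

lemma second_moment_rate_subcritical:
  fixes H T :: real and \<alpha> :: complex
  assumes "1/2 < H" "0 < T" "0 < Re \<alpha>" "Re \<alpha> < 1 - H"
  shows "Limsup (at_left T) (\<lambda>t. ereal ((T - t) powr (2 * (1 - H - Re \<alpha>)) * second_moment_G H T \<alpha> t)) < \<infinity>"
proof -
  define \<gamma> where "\<gamma> = 2 * (1 - H - Re \<alpha>)"
  have \<gamma>: "0 < \<gamma>"
    using assms by (simp add: \<gamma>_def)
  obtain C where C: "0 \<le> C"
    and bound: "\<And>t e. t \<le> T \<Longrightarrow> 0 \<le> e \<Longrightarrow>
      (\<integral>\<^sup>+x. ennreal (indicator {T-t..T} x * x powr (2 * Re \<alpha> + 2*H - 3)) \<partial>lborel) \<le> ennreal e \<Longrightarrow>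
      \<bar>second_moment_G H T \<alpha> t\<bar> \<le> C * e"
    by (rule second_moment_le[of H T "Re \<alpha>" \<alpha>]) (use assms in auto)
  have "\<forall>\<^sub>F t in at_left T. ereal ((T - t) powr \<gamma> * second_moment_G H T \<alpha> t) \<le> ereal (C / \<gamma>)"
    using eventually_at_left_real[OF assms(2)]
  proof eventually_elim
    case (elim t)
    then have pos: "0 < T - t"
      by simp
    have "(\<integral>\<^sup>+x. ennreal (indicator {T-t..T} x * x powr (2 * Re \<alpha> + 2*H - 3)) \<partial>lborel)
        \<le> ennreal ((T - t) powr (- \<gamma>) / \<gamma>)"
      using nn_integral_powr_interval_le[of "2 * Re \<alpha> + 2*H - 3" "T - t" T] assms pos
      by (simp add: \<gamma>_def algebra_simps)
    then have "\<bar>second_moment_G H T \<alpha> t\<bar> \<le> C * ((T - t) powr (- \<gamma>) / \<gamma>)"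
      using elim \<gamma> by (intro bound) auto
    then have "(T - t) powr \<gamma> * second_moment_G H T \<alpha> t \<le> (T - t) powr \<gamma> * (C * ((T - t) powr (- \<gamma>) / \<gamma>))"
      by (intro mult_left_mono) auto
    also have "\<dots> = C / \<gamma>"
      using pos by (simp add: powr_minus field_simps)
    finally show ?case
      by simp
  qed
  then have "Limsup (at_left T) (\<lambda>t. ereal ((T - t) powr \<gamma> * second_moment_G H T \<alpha> t)) \<le> ereal (C / \<gamma>)"
    by (rule Limsup_bounded)
  then show ?thesis
    unfolding \<gamma>_def by (rule le_less_trans) simp
qed

lemma second_moment_rate_critical:
  fixes H T :: real and \<alpha> :: complex
  assumes "1/2 < H" "H < 1" "0 < T" "Re \<alpha> = 1 - H"
  shows "Limsup (at_left T) (\<lambda>t. ereal (second_moment_G H T \<alpha> t / - ln (T - t))) < \<infinity>"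
proof -
  obtain C where C: "0 \<le> C"
    and bound: "\<And>t e. t \<le> T \<Longrightarrow> 0 \<le> e \<Longrightarrow>
      (\<integral>\<^sup>+x. ennreal (indicator {T-t..T} x * x powr (2 * Re \<alpha> + 2*H - 3)) \<partial>lborel) \<le> ennreal e \<Longrightarrow>
      \<bar>second_moment_G H T \<alpha> t\<bar> \<le> C * e"
    by (rule second_moment_le[of H T "Re \<alpha>" \<alpha>]) (use assms in auto)
  define \<delta> where "\<delta> = exp (- (\<bar>ln T\<bar> + 1))"
  have "max 0 (T - \<delta>) < T"
    using assms(3) by (simp add: \<delta>_def)
  from eventually_at_left_real[OF this]
  have "\<forall>\<^sub>F t in at_left T. ereal (second_moment_G H T \<alpha> t / - ln (T - t)) \<le> ereal (2 * C)"
  proof eventually_elim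
    case (elim t)
    then have pos: "0 < T - t" "T - t \<le> T" and small: "T - t < \<delta>"
      by auto
    have "ln (T - t) < ln \<delta>"
      using small pos by simp
    then have "ln (T - t) < - (\<bar>ln T\<bar> + 1)"
      by (simp add: \<delta>_def)
    then have log_pos: "0 < - ln (T - t)" and log_le: "ln T - ln (T - t) \<le> 2 * - ln (T - t)"
      by linarith+
    have "(\<integral>\<^sup>+x. ennreal (indicator {T-t..T} x * x powr (2 * Re \<alpha> + 2*H - 3)) \<partial>lborel)
        = ennreal (ln T - ln (T - t))"
      using nn_integral_inverse_interval[OF pos] assms by simp
    then have "\<bar>second_moment_G H T \<alpha> t\<bar> \<le> C * (ln T - ln (T - t))"
      using pos by (intro bound) (auto simp: ln_le_cancel_iff)
    also have "\<dots> \<le> 2 * C * - ln (T - t)"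
      using mult_left_mono[OF log_le C] by (simp add: mult_ac)
    finally have "second_moment_G H T \<alpha> t \<le> 2 * C * - ln (T - t)"
      by (rule abs_le_D1)
    then show ?case
      by (simp only: ereal_less_eq(3) pos_divide_le_eq[OF log_pos])
  qed
  then have "Limsup (at_left T) (\<lambda>t. ereal (second_moment_G H T \<alpha> t / - ln (T - t))) \<le> ereal (2 * C)"
    by (rule Limsup_bounded)
  then show ?thesis
    by (rule le_less_trans) simp
qed

theorem proposition3p1:
  fixes H T lam w :: real and \<alpha> :: complex
  assumes "1/2 < H" and "H < 1" and "T > 0" and "lam > 0"
    and "\<alpha> = complex_of_real lam - \<i> * complex_of_real w"
  shows "(\<forall>t\<in>{0..<T}. set_integrable lborel (cube4 T) (tensor_integrand H (psi T \<alpha> t)))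
    \<and> (lam < 1 - H \<longrightarrow>
         Limsup (at_left T) (\<lambda>t. ereal ((T - t) powr (2 * (1 - H - lam)) * second_moment_G H T \<alpha> t)) < \<infinity>)
    \<and> (lam = 1 - H \<longrightarrow>
         Limsup (at_left T) (\<lambda>t. ereal (second_moment_G H T \<alpha> t / (- ln (T - t)))) < \<infinity>)
    \<and> (1 - H < lam \<and> lam < 1 \<longrightarrow>
         (\<exists>L::real. ((\<lambda>t. second_moment_G H T \<alpha> t) \<longlongrightarrow> L) (at_left T)))"
proof -
  have Re_\<alpha>: "Re \<alpha> = lam"
    using assms(5) by simp
  have "set_integrable lborel (cube4 T) (tensor_integrand H (psi T \<alpha> t))" if "t \<in> {0..<T}" for t
    using that assms(4) Re_\<alpha> by (intro set_integrable_tensor_psi_before_T[OF assms(1,2)]) auto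
  moreover have "Limsup (at_left T) (\<lambda>t. ereal ((T - t) powr (2 * (1 - H - lam)) * second_moment_G H T \<alpha> t)) < \<infinity>"
    if "lam < 1 - H"
    using second_moment_rate_subcritical[OF assms(1,3), of \<alpha>] that assms(4) unfolding Re_\<alpha> by simp
  moreover have "Limsup (at_left T) (\<lambda>t. ereal (second_moment_G H T \<alpha> t / (- ln (T - t)))) < \<infinity>"
    if "lam = 1 - H"
    using second_moment_rate_critical[OF assms(1-3), of \<alpha>] that unfolding Re_\<alpha> by simp
  moreover have "((\<lambda>t. second_moment_G H T \<alpha> t) \<longlongrightarrow> second_moment_G H T \<alpha> T) (at_left T)"
    if "1 - H < lam"
    using second_moment_tendsto_supercritical[OF assms(1-3), of \<alpha>] that unfolding Re_\<alpha> by simp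
  ultimately show ?thesis
    by blast
qed

end
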